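(* Let $m$ be a positive integer. For every integer $n$ with $\frac{3^{m-1}+1}{2}\le n\le \frac{3^{m-1}+1}{2}+3^{m-2}$, $$t(n)=\sum_{R=\lceil \frac{n-1}{3}\rceil}^{\lfloor\frac{2n+3^{m-2}-1}{4}\rfloor} t(R)\;-\;\sum_{R=\lceil\frac{3n+2}{5}\rceil}^{\lfloor\frac{2n+3^{m-2}-1}{4}\rfloor}\ \sum_{S=\lceil\frac{R-1}{3}\rceil}^{2R-n-1} t(S),$$ and for every integer $n$ with $\frac{3^{m-1}+1}{2}+3^{m-2}+1\le n\le\frac{3^m-1}{2}$, $$t(n)=\sum_{R=\lceil\frac{n-1}{3}\rceil}^{\frac{3^{m-1}-1}{2}} t(R).$$ (Empty sums are $0$.)
   Context: A weighing partition of a positive integer $n$ is a multiset of positive integers summing to $n$ such that every integer $\ell$ with $1\le\ell\le n$ can be written as $\sum_j u_jw_j$ with $u_j\in\{-1,0,1\}$ (weighing on a two-pan balance with weights on both pans). A feasible partition of $n$ is a weighing partition of $n$ whose number of parts is minimal among all weighing partitions of $n$. For a positive integer $n$, $t(n)$ denotes the number of feasible partitions of $n$ (as multisets), and by convention $t(0)=1$. *)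

theory Defs
  imports Complex_Main "HOL-Library.Multiset"
begin

definition weighing_partition :: "nat \<Rightarrow> nat multiset \<Rightarrow> bool" where
  "weighing_partition n M \<longleftrightarrow>
     (\<forall>x\<in>#M. 0 < x) \<and> sum_mset M = n \<and>
     (\<exists>ws. mset ws = M \<and>
        (\<forall>l\<in>{1..n}. \<exists>u::int list. length u = length ws \<and> set u \<subseteq> {-1, 0, 1} \<and>
              int l = (\<Sum>j<length ws. u ! j * int (ws ! j))))"

definition feasible_partition :: "nat \<Rightarrow> nat multiset \<Rightarrow> bool" where
  "feasible_partition n M \<longleftrightarrow> weighing_partition n M \<and>
     (\<forall>M'. weighing_partition n M' \<longrightarrow> size M \<le> size M')"

definition t :: "nat \<Rightarrow> nat" where
  "t n = (if n = 0 then 1 else card {M. feasible_partition n M})"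

end

(*
  Sorting the parts increasingly, a multiset of positive weights weighs every amount 1..n on a
  two-pan balance iff each part is at most twice the sum of the smaller parts plus one. Hence
  k parts weigh at most (3^k - 1)/2, and the feasible partitions of n are exactly the weighing
  partitions with m parts, where 3^(m-1) < 2n + 1 <= 3^m.

  Removing the largest part d of such a partition leaves a weighing partition of R = n - d
  into m - 1 parts, all of them at most d, with d <= 2R + 1; conversely every such pair gives
  back a weighing partition. So t(n) is a sum over R of the number of partitions of R with
  m - 1 parts bounded by n - R. A partition into k parts has no part above 3^(k-1), so in the
  upper half of the range the bound is void and the term is t(R). In the lower half it is
  not, and the partitions of R violating it are those whose own largest part exceeds n - R;
  counting them by their remainder S gives the subtracted double sum.
*)

theory Submission
  imports Defs "HOL-Library.Set_Algebras"
begin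

definition signed_sums :: "nat multiset \<Rightarrow> int set" where
  "signed_sums M = (\<Sum>w\<in>#M. {- int w, 0, int w})"

lemma signed_sums_empty [simp]: "signed_sums {#} = {0}"
  by (simp add: signed_sums_def)

lemma signed_sums_add_mset:
  "signed_sums (add_mset w M) = {- int w, 0, int w} + signed_sums M"
  by (simp add: signed_sums_def)

lemma mem_signed_sums_add_mset:
  "z \<in> signed_sums (add_mset w M) \<longleftrightarrow> (\<exists>e\<in>{-1, 0, 1}. z - e * int w \<in> signed_sums M)"
  by (force simp: signed_sums_add_mset set_plus_def)

lemma signed_sums_union: "signed_sums (A + B) = signed_sums A + signed_sums B"
  by (simp add: signed_sums_def)

lemma signed_sums_mset:
  "signed_sums (mset ws) = {\<Sum>j<length ws. u ! j * int (ws ! j) | u.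
     length u = length ws \<and> set u \<subseteq> {-1, 0, 1}}"
proof (induction ws)
  case Nil
  then show ?case by auto
next
  case (Cons w ws)
  have sum_Cons: "(\<Sum>j<length (w # ws). (e # u) ! j * int ((w # ws) ! j))
      = e * int w + (\<Sum>j<length ws. u ! j * int (ws ! j))" for e u
    by (simp only: length_Cons sum.lessThan_Suc_shift) simp
  show ?case
  proof (intro set_eqI iffI)
    fix z assume "z \<in> signed_sums (mset (w # ws))"
    then obtain e where e: "e \<in> {-1, 0, 1}" "z - e * int w \<in> signed_sums (mset ws)"
      unfolding mset.simps mem_signed_sums_add_mset by blast
    then obtain u where u: "length u = length ws" "set u \<subseteq> {-1, 0, 1}"
      "z - e * int w = (\<Sum>j<length ws. u ! j * int (ws ! j))"
      unfolding Cons.IH by blast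
    then have "z = (\<Sum>j<length (w # ws). (e # u) ! j * int ((w # ws) ! j))"
      unfolding sum_Cons by simp
    then show "z \<in> {\<Sum>j<length (w # ws). u ! j * int ((w # ws) ! j) | u.
       length u = length (w # ws) \<and> set u \<subseteq> {-1, 0, 1}}"
      using e u by (intro CollectI exI[of _ "e # u"]) auto
  next
    fix z assume "z \<in> {\<Sum>j<length (w # ws). u ! j * int ((w # ws) ! j) | u.
       length u = length (w # ws) \<and> set u \<subseteq> {-1, 0, 1}}"
    then obtain e u where "e \<in> {-1, 0, 1}" "length u = length ws" "set u \<subseteq> {-1, 0, 1}"
      "z = (\<Sum>j<length (w # ws). (e # u) ! j * int ((w # ws) ! j))"
      by (auto simp only: length_Suc_conv length_Cons) auto
    then show "z \<in> signed_sums (mset (w # ws))"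
      unfolding sum_Cons by (auto simp: mem_signed_sums_add_mset Cons.IH)
  qed
qed

lemma abs_le_of_mem_signed_sums: "z \<in> signed_sums M \<Longrightarrow> \<bar>z\<bar> \<le> int (sum_mset M)"
proof (induction M arbitrary: z)
  case (add w M)
  then show ?case by (fastforce simp: mem_signed_sums_add_mset)
qed simp

(* keeps int (sum_mset M) an atom for linear arithmetic *)
declare of_nat_sum_mset [simp del]

definition two_pan_complete :: "nat multiset \<Rightarrow> bool" where
  "two_pan_complete M \<longleftrightarrow> (\<forall>x\<in>#M. x \<le> 2 * sum_mset {#y \<in># M. y < x#} + 1)"

lemma two_pan_complete_empty [simp]: "two_pan_complete {#}"
  by (simp add: two_pan_complete_def)

lemma part_le_sum_mset: "x \<in># M \<Longrightarrow> x \<le> sum_mset (M :: nat multiset)"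
  by (metis le_add1 multi_member_split sum_mset.add_mset)

lemma sum_mset_filter_le: "sum_mset (filter_mset P M) \<le> sum_mset (M :: nat multiset)"
  by (metis le_add1 multiset_partition sum_mset.union)

lemma two_pan_complete_add_mset_max:
  assumes "\<forall>y\<in>#M. y \<le> x"
  shows "two_pan_complete (add_mset x M) \<longleftrightarrow> two_pan_complete M \<and> x \<le> 2 * sum_mset M + 1"
proof -
  have same_below: "{#y \<in># add_mset x M. y < z#} = {#y \<in># M. y < z#}" if "z \<le> x" for z
    using that by simp
  have "x \<le> 2 * sum_mset {#y \<in># M. y < x#} + 1"
    if "two_pan_complete M" "x \<le> 2 * sum_mset M + 1"
  proof (cases "x \<in># M")
    case False
    then have "{#y \<in># M. y < x#} = M"
      using assms by (metis (mono_tags, lifting) filter_mset_True filter_mset_cong le_neq_implies_less)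
    then show ?thesis using that(2) by simp
  qed (use that in \<open>auto simp: two_pan_complete_def\<close>)
  moreover have "sum_mset {#y \<in># M. y < x#} \<le> sum_mset M"
    by (rule sum_mset_filter_le)
  ultimately show ?thesis
    using assms same_below unfolding two_pan_complete_def by fastforce
qed

lemma two_pan_complete_imp_mem_signed_sums:
  "two_pan_complete M \<Longrightarrow> \<bar>z\<bar> \<le> int (sum_mset M) \<Longrightarrow> z \<in> signed_sums M"
proof (induction M arbitrary: z rule: multiset_induct_max)
  case (add x M)
  then have "two_pan_complete M" "int x \<le> 2 * int (sum_mset M) + 1"
    using two_pan_complete_add_mset_max by auto
  moreover have "\<exists>e\<in>{-1, 0, 1}. \<bar>z - e * int x\<bar> \<le> int (sum_mset M)"
    using add.prems(2) calculation(2) by (cases "z < - int (sum_mset M)"; cases "z > int (sum_mset M)") force+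
  ultimately show ?case
    using add.IH by (auto simp: mem_signed_sums_add_mset)
qed simp

lemma signed_sums_gap_below_top:
  assumes "\<forall>y\<in>#M. x \<le> y" "a \<in> signed_sums M"
  shows "a = int (sum_mset M) \<or> a + int x \<le> int (sum_mset M)"
  using assms
proof (induction M arbitrary: a)
  case (add w M)
  then obtain e where "e \<in> {-1, 0, 1}" "a - e * int w \<in> signed_sums M"
    unfolding mem_signed_sums_add_mset by blast
  then show ?case
    using add abs_le_of_mem_signed_sums[of "a - e * int w" M] by fastforce
qed simp

lemma not_mem_signed_sums_gap:
  assumes "\<forall>y\<in>#L. x \<le> y" "2 * sum_mset T + 1 < x"
  shows "int (sum_mset L) - int (sum_mset T) - 1 \<notin> signed_sums (L + T)"
proof
  assume "int (sum_mset L) - int (sum_mset T) - 1 \<in> signed_sums (L + T)"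
  then obtain a b where ab: "int (sum_mset L) - int (sum_mset T) - 1 = a + b"
    "a \<in> signed_sums L" "b \<in> signed_sums T"
    by (auto simp: signed_sums_union set_plus_def)
  \<comment> \<open>a signed sum of L other than sum L lies at least x below it,
    and b cannot bridge that gap\<close>
  have "a = int (sum_mset L) \<or> a + int x \<le> int (sum_mset L)"
    using assms(1) ab(2) by (rule signed_sums_gap_below_top)
  moreover have "\<bar>b\<bar> \<le> int (sum_mset T)"
    using ab(3) by (rule abs_le_of_mem_signed_sums)
  ultimately show False
    using ab(1) assms(2) by linarith
qed

lemma signed_sums_cover_iff_two_pan_complete:
  "(\<forall>l\<in>{1..sum_mset M}. int l \<in> signed_sums M) \<longleftrightarrow> two_pan_complete M"
proof
  assume cover: "\<forall>l\<in>{1..sum_mset M}. int l \<in> signed_sums M"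
  show "two_pan_complete M"
  proof (rule ccontr)
    assume "\<not> two_pan_complete M"
    then obtain x where "x \<in># M" and big: "2 * sum_mset {#y \<in># M. y < x#} + 1 < x"
      unfolding two_pan_complete_def by auto
    define L where "L = {#y \<in># M. \<not> y < x#}"
    define T where "T = {#y \<in># M. y < x#}"
    have "M = L + T"
      unfolding L_def T_def by (metis add.commute multiset_partition)
    have "x \<in># L"
      using \<open>x \<in># M\<close> unfolding L_def by simp
    then have "x \<le> sum_mset L"
      by (rule part_le_sum_mset)
    moreover have "2 * sum_mset T + 1 < x"
      using big unfolding T_def .
    moreover have "sum_mset M = sum_mset L + sum_mset T"
      using \<open>M = L + T\<close> by simp
    ultimately have "sum_mset L - sum_mset T - 1 \<in> {1..sum_mset M}"
      "int (sum_mset L - sum_mset T - 1) = int (sum_mset L) - int (sum_mset T) - 1"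
      by auto
    then have "int (sum_mset L) - int (sum_mset T) - 1 \<in> signed_sums (L + T)"
      using cover \<open>M = L + T\<close> by metis
    moreover have "\<forall>y\<in>#L. x \<le> y"
      unfolding L_def by auto
    ultimately show False
      using not_mem_signed_sums_gap \<open>2 * sum_mset T + 1 < x\<close> by blast
  qed
next
  assume "two_pan_complete M"
  then show "\<forall>l\<in>{1..sum_mset M}. int l \<in> signed_sums M"
    using two_pan_complete_imp_mem_signed_sums by simp
qed

lemma weighing_partition_iff:
  "weighing_partition n M \<longleftrightarrow> (\<forall>x\<in>#M. 0 < x) \<and> sum_mset M = n \<and> two_pan_complete M"
proof -
  have rep: "(\<exists>u::int list. length u = length ws \<and> set u \<subseteq> {-1, 0, 1} \<and>
      z = (\<Sum>j<length ws. u ! j * int (ws ! j))) \<longleftrightarrow> z \<in> signed_sums (mset ws)" for ws z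
    unfolding signed_sums_mset by blast
  have "(\<exists>ws. mset ws = M \<and> (\<forall>l\<in>{1..n}. int l \<in> signed_sums (mset ws)))
        \<longleftrightarrow> (\<forall>l\<in>{1..n}. int l \<in> signed_sums M)"
    using ex_mset[of M] by auto
  then show ?thesis
    unfolding weighing_partition_def rep signed_sums_cover_iff_two_pan_complete[symmetric] by auto
qed

lemma two_pan_complete_sum_bound: "two_pan_complete M \<Longrightarrow> 2 * sum_mset M + 1 \<le> 3 ^ size M"
proof (induction M rule: multiset_induct_max)
  case (add x M)
  then show ?case by (simp add: two_pan_complete_add_mset_max)
qed simp

lemma two_pan_complete_part_bound: "two_pan_complete M \<Longrightarrow> y \<in># M \<Longrightarrow> 3 * y \<le> 3 ^ size M"
proof (induction M rule: multiset_induct_max)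
  case (add x M)
  then have "y \<le> 2 * sum_mset M + 1" "2 * sum_mset M + 1 \<le> 3 ^ size M"
    using two_pan_complete_sum_bound by (auto simp: two_pan_complete_add_mset_max)
  then show ?case by simp
qed simp

lemma exists_weighing_partition:
  "2 * n + 1 \<le> 3 ^ k \<Longrightarrow> \<exists>M. weighing_partition n M \<and> size M \<le> k"
proof (induction k arbitrary: n)
  case 0
  then show ?case by (intro exI[of _ "{#}"]) (simp add: weighing_partition_iff)
next
  case (Suc k)
  show ?case
  proof (cases "n = 0")
    case True
    then show ?thesis by (intro exI[of _ "{#}"]) (simp add: weighing_partition_iff)
  next
    case False
    \<comment> \<open>split off a largest part d of about two thirds of n\<close>
    define s where "s = (n + 1) div 3"
    define d where "d = n - s"
    have "odd ((3::nat) ^ k)"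
      by simp
    then obtain p where p: "3 ^ k = 2 * p + (1::nat)"
      by (rule oddE)
    have "2 * s + 1 \<le> 3 ^ k"
      using Suc.prems p unfolding s_def by simp
    then obtain M where M: "weighing_partition s M" "size M \<le> k"
      using Suc.IH by blast
    have parts: "\<forall>y\<in>#M. y \<le> d"
      using M(1) part_le_sum_mset False unfolding weighing_partition_iff d_def s_def
      by fastforce
    have "0 < d" "d \<le> 2 * s + 1" "s + d = n"
      using False unfolding d_def s_def by linarith+
    then have "weighing_partition n (add_mset d M)"
      using M(1) parts by (auto simp: weighing_partition_iff two_pan_complete_add_mset_max)
    then show ?thesis
      using M(2) by (intro exI[of _ "add_mset d M"]) simp
  qed
qed

definition weighing_partitions :: "nat \<Rightarrow> nat \<Rightarrow> nat multiset set" where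
  "weighing_partitions n k = {M. weighing_partition n M \<and> size M = k}"

lemma feasible_partition_iff:
  assumes "2 * n + 1 \<le> 3 ^ m" "3 ^ m < 3 * (2 * n + 1)"
  shows "feasible_partition n M \<longleftrightarrow> M \<in> weighing_partitions n m"
proof -
  have "m \<le> size M'" if "weighing_partition n M'" for M'
  proof (rule ccontr)
    assume "\<not> m \<le> size M'"
    then have "3 * 3 ^ size M' \<le> (3::nat) ^ m"
      by (metis power_Suc power_increasing not_le Suc_leI zero_less_numeral one_le_numeral)
    moreover have "2 * n + 1 \<le> 3 ^ size M'"
      using that two_pan_complete_sum_bound weighing_partition_iff by metis
    then have "3 * (2 * n + 1) \<le> 3 * 3 ^ size M'"
      by simp
    ultimately show False
      using assms(2) by linarith
  qed
  moreover obtain M0 where "weighing_partition n M0" "size M0 \<le> m"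
    using exists_weighing_partition assms(1) by blast
  ultimately show ?thesis
    unfolding feasible_partition_def weighing_partitions_def by force
qed

lemma t_eq_card_weighing_partitions:
  assumes "2 * n + 1 \<le> 3 ^ m" "3 ^ m < 3 * (2 * n + 1)"
  shows "t n = card (weighing_partitions n m)"
proof (cases "n = 0")
  case True
  then have "m = 0"
    using assms(2) by (cases m) auto
  then have "weighing_partitions n m = {{#}}"
    using True by (auto simp: weighing_partitions_def weighing_partition_iff)
  then show ?thesis
    using True by (simp add: t_def)
next
  case False
  have "{M. feasible_partition n M} = weighing_partitions n m"
    using feasible_partition_iff[OF assms] by blast
  then show ?thesis
    using False by (simp add: t_def)
qed

lemma weighing_partition_add_mset_max:
  assumes "\<forall>y\<in>#M. y \<le> d"
  shows "weighing_partition (R + d) (add_mset d M) \<longleftrightarrow>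
    0 < d \<and> weighing_partition R M \<and> d \<le> 2 * R + 1"
  using assms by (auto simp: weighing_partition_iff two_pan_complete_add_mset_max)

lemma obtain_max_part:
  fixes M :: "'a::linorder multiset"
  assumes "M \<noteq> {#}"
  obtains d M' where "M = add_mset d M'" "\<forall>y\<in>#M'. y \<le> d"
proof
  show "M = add_mset (Max_mset M) (M - {#Max_mset M#})"
    using assms by simp
  show "\<forall>y\<in>#M - {#Max_mset M#}. y \<le> Max_mset M"
    by (meson Max_ge finite_set_mset in_diffD)
qed

lemma finite_weighing_partitions: "finite (weighing_partitions n k)"
proof (rule finite_subset)
  show "weighing_partitions n k \<subseteq> mset ` {xs. set xs \<subseteq> {0..n} \<and> length xs = k}"
  proof
    fix M assume "M \<in> weighing_partitions n k"
    then have "sum_mset M = n" "size M = k"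
      by (auto simp: weighing_partitions_def weighing_partition_iff)
    moreover obtain xs where "mset xs = M"
      using ex_mset by blast
    ultimately have "set xs \<subseteq> {0..n}" "length xs = k"
      using part_le_sum_mset by auto
    then show "M \<in> mset ` {xs. set xs \<subseteq> {0..n} \<and> length xs = k}"
      using \<open>mset xs = M\<close> by blast
  qed
qed (intro finite_imageI finite_lists_length_eq; simp)

definition bounded_partitions :: "nat \<Rightarrow> nat \<Rightarrow> nat \<Rightarrow> nat multiset set" where
  "bounded_partitions n k b = {M \<in> weighing_partitions n k. \<forall>x\<in>#M. x \<le> b}"

lemma bounded_partitions_Suc:
  "bounded_partitions n (Suc k) b =
    (\<Union>R\<in>{R. R < n \<and> n \<le> 3 * R + 1 \<and> n - R \<le> b}. add_mset (n - R) ` bounded_partitions R k (n - R))"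
    (is "?lhs = ?rhs")
proof
  show "?lhs \<subseteq> ?rhs"
  proof
    fix M assume M: "M \<in> ?lhs"
    then have "M \<noteq> {#}"
      by (auto simp: bounded_partitions_def weighing_partitions_def)
    then obtain d M' where M': "M = add_mset d M'" "\<forall>y\<in>#M'. y \<le> d"
      by (rule obtain_max_part)
    define R where "R = sum_mset M'"
    have "weighing_partition (R + d) (add_mset d M')"
      using M M' by (auto simp: bounded_partitions_def weighing_partitions_def
          weighing_partition_iff R_def)
    then have "0 < d" "weighing_partition R M'" "d \<le> 2 * R + 1"
      using weighing_partition_add_mset_max M'(2) by blast+
    moreover have "n = R + d" "d \<le> b" "size M' = k"
      using M M' unfolding R_def by (auto simp: bounded_partitions_def weighing_partitions_def
          weighing_partition_iff)
    ultimately have "R \<in> {R. R < n \<and> n \<le> 3 * R + 1 \<and> n - R \<le> b}"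
      "M' \<in> bounded_partitions R k (n - R)" "M = add_mset (n - R) M'"
      using M' by (auto simp: bounded_partitions_def weighing_partitions_def)
    then show "M \<in> ?rhs"
      by blast
  qed
next
  show "?rhs \<subseteq> ?lhs"
  proof
    fix M assume "M \<in> ?rhs"
    then obtain R M' where "R < n" "n \<le> 3 * R + 1" "n - R \<le> b" "M = add_mset (n - R) M'"
      "M' \<in> bounded_partitions R k (n - R)"
      by blast
    moreover have "n = R + (n - R)"
      using \<open>R < n\<close> by simp
    ultimately show "M \<in> ?lhs"
      using weighing_partition_add_mset_max[of M' "n - R" R]
      by (auto simp: bounded_partitions_def weighing_partitions_def)
  qed
qed

lemma Max_mset_add_mset_max: "\<forall>y\<in>#M. y \<le> d \<Longrightarrow> Max_mset (add_mset d M) = (d :: 'a::linorder)"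
  by (intro Max_eqI) auto

lemma card_bounded_partitions_Suc:
  "card (bounded_partitions n (Suc k) b) =
    (\<Sum>R | R < n \<and> n \<le> 3 * R + 1 \<and> n - R \<le> b. card (bounded_partitions R k (n - R)))"
proof -
  let ?I = "{R. R < n \<and> n \<le> 3 * R + 1 \<and> n - R \<le> b}"
  have "finite (bounded_partitions R k (n - R))" for R
    using finite_weighing_partitions by (simp add: bounded_partitions_def)
  moreover have "add_mset (n - R) ` bounded_partitions R k (n - R) \<inter>
      add_mset (n - R') ` bounded_partitions R' k (n - R') = {}"
    if "R \<in> ?I" "R' \<in> ?I" "R \<noteq> R'" for R R'
  proof -
    \<comment> \<open>the added part is the largest one, so it determines R\<close>
    have max: "Max_mset N = n - R" if "N \<in> add_mset (n - R) ` bounded_partitions R k (n - R)" for N R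
    proof -
      from that obtain M where "M \<in> bounded_partitions R k (n - R)" "N = add_mset (n - R) M"
        by blast
      then show ?thesis
        using Max_mset_add_mset_max[of M "n - R"] by (simp add: bounded_partitions_def)
    qed
    have "n - R \<noteq> n - R'"
      using that by auto
    then show ?thesis
      unfolding disjoint_iff using max[of _ R] max[of _ R'] by metis
  qed
  ultimately have "card (bounded_partitions n (Suc k) b) =
      (\<Sum>R\<in>?I. card (add_mset (n - R) ` bounded_partitions R k (n - R)))"
    unfolding bounded_partitions_Suc by (intro card_UN_disjoint) auto
  then show ?thesis
    by (simp add: card_image inj_on_def)
qed

lemma weighing_partitions_eq_empty: "3 ^ k < 2 * n + 1 \<Longrightarrow> weighing_partitions n k = {}"
  using two_pan_complete_sum_bound
  by (fastforce simp: weighing_partitions_def weighing_partition_iff)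

lemma bounded_partitions_eq_empty: "3 ^ k < 2 * n + 1 \<Longrightarrow> bounded_partitions n k b = {}"
  by (simp add: bounded_partitions_def weighing_partitions_eq_empty)

lemma bounded_partitions_Suc_eq_empty:
  assumes "3 ^ k + 2 * b \<le> 2 * n"
  shows "bounded_partitions n (Suc k) b = {}"
proof -
  have "bounded_partitions R k (n - R) = {}" if "n - R \<le> b" for R
    using assms that by (intro bounded_partitions_eq_empty) linarith
  then show ?thesis
    unfolding bounded_partitions_Suc by auto
qed

lemma bounded_partitions_eq_weighing_partitions:
  assumes "3 ^ k \<le> 3 * b \<or> n \<le> b"
  shows "bounded_partitions n k b = weighing_partitions n k"
proof -
  have "x \<le> b" if "M \<in> weighing_partitions n k" "x \<in># M" for M x
    using that assms two_pan_complete_part_bound[of M x] part_le_sum_mset[of x M]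
    by (auto simp: weighing_partitions_def weighing_partition_iff)
  then show ?thesis
    unfolding bounded_partitions_def by blast
qed

lemma t_eq_sum_bounded_partitions:
  assumes "2 * n + 1 \<le> 3 ^ Suc k" "3 ^ Suc k < 3 * (2 * n + 1)"
  shows "t n = (\<Sum>R | R < n \<and> n \<le> 3 * R + 1. card (bounded_partitions R k (n - R)))"
proof -
  have "t n = card (bounded_partitions n (Suc k) n)"
    using t_eq_card_weighing_partitions[OF assms] bounded_partitions_eq_weighing_partitions by simp
  also have "\<dots> = (\<Sum>R | R < n \<and> n \<le> 3 * R + 1. card (bounded_partitions R k (n - R)))"
    unfolding card_bounded_partitions_Suc by (intro sum.cong) auto
  finally show ?thesis .
qed

lemma t_split_at_max_part_bound:
  assumes "3 ^ k < 2 * R + 1" "2 * R + 1 \<le> 3 ^ Suc k"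
    and "2 * R \<le> 3 ^ k + 2 * b + 1" "3 ^ k \<le> 3 * b + 3"
  shows "t R = card (bounded_partitions R (Suc k) b) + (\<Sum>S | R \<le> 3 * S + 1 \<and> S + b < R. t S)"
proof -
  let ?J = "{S. S < R \<and> R \<le> 3 * S + 1}"
  let ?small = "{S. S < R \<and> R \<le> 3 * S + 1 \<and> R - S \<le> b}" and ?large = "{S. R \<le> 3 * S + 1 \<and> S + b < R}"
  have "3 ^ Suc k < 3 * (2 * R + 1)"
    using assms(1) by simp
  then have "t R = (\<Sum>S\<in>?J. card (bounded_partitions S k (R - S)))"
    using t_eq_sum_bounded_partitions assms(2) by simp
  also have "\<dots> = (\<Sum>S\<in>?small. card (bounded_partitions S k (R - S)))
      + (\<Sum>S\<in>?large. card (bounded_partitions S k (R - S)))"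
  proof -
    have "finite ?small" "finite ?large"
      by (auto intro: finite_subset[of _ "{..<R}"])
    moreover have "?small \<inter> ?large = {}"
      by auto
    moreover have "?J = ?small \<union> ?large"
      by auto
    ultimately show ?thesis
      by (simp only: sum.union_disjoint)
  qed
  also have "(\<Sum>S\<in>?small. card (bounded_partitions S k (R - S))) = card (bounded_partitions R (Suc k) b)"
    unfolding card_bounded_partitions_Suc by (intro sum.cong) auto
  also have "(\<Sum>S\<in>?large. card (bounded_partitions S k (R - S))) = (\<Sum>S\<in>?large. t S)"
  proof (intro sum.cong refl)
    fix S assume "S \<in> ?large"
    then have S: "R \<le> 3 * S + 1" "S + b < R" by auto
    then have "3 ^ k \<le> 3 * (R - S)"
      using assms(4) by linarith
    then have "bounded_partitions S k (R - S) = weighing_partitions S k"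
      by (intro bounded_partitions_eq_weighing_partitions) simp
    moreover have "t S = card (weighing_partitions S k)"
    proof (rule t_eq_card_weighing_partitions)
      show "2 * S + 1 \<le> 3 ^ k"
        using S assms(3) by linarith
      show "3 ^ k < 3 * (2 * S + 1)"
        using S(1) assms(1) by simp
    qed
    ultimately show "card (bounded_partitions S k (R - S)) = t S"
      by simp
  qed
  finally show ?thesis .
qed

lemma t_split_lower_window:
  assumes "3 * 3 ^ k + 1 \<le> 2 * n" "2 * n \<le> 5 * 3 ^ k + 1"
    and "n \<le> 3 * R + 1" "4 * R + 1 \<le> 2 * n + 3 ^ k"
  shows "t R = card (bounded_partitions R (Suc k) (n - R))
    + (\<Sum>S | R \<le> 3 * S + 1 \<and> S + n + 1 \<le> 2 * R. t S)"
proof -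
  define P :: nat where "P = 3 ^ k"
  obtain p where p: "P = 2 * p + 1"
    using oddE[of P] unfolding P_def by auto
  have "R < n" "P < 2 * R + 1" "2 * R \<le> P + 2 * (n - R) + 1" "P \<le> 3 * (n - R) + 3"
    and "4 * R \<le> 12 * p + 6"
    using assms p unfolding P_def[symmetric] by linarith+
  moreover from this(5) have "2 * R + 1 \<le> 3 * P"
    using p by presburger
  ultimately have "t R = card (bounded_partitions R (Suc k) (n - R))
      + (\<Sum>S | R \<le> 3 * S + 1 \<and> S + (n - R) < R. t S)"
    unfolding P_def by (intro t_split_at_max_part_bound) simp_all
  also have "{S. R \<le> 3 * S + 1 \<and> S + (n - R) < R} = {S. R \<le> 3 * S + 1 \<and> S + n + 1 \<le> 2 * R}"
    using \<open>R < n\<close> by auto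
  finally show ?thesis .
qed

lemma t_recurrence_lower:
  assumes "3 * 3 ^ k + 1 \<le> 2 * n" "2 * n \<le> 5 * 3 ^ k + 1"
  shows "(\<Sum>R | n \<le> 3 * R + 1 \<and> 4 * R + 1 \<le> 2 * n + 3 ^ k. t R) =
    t n + (\<Sum>R | n \<le> 3 * R + 1 \<and> 4 * R + 1 \<le> 2 * n + 3 ^ k \<and> 3 * n + 2 \<le> 5 * R.
             \<Sum>S | R \<le> 3 * S + 1 \<and> S + n + 1 \<le> 2 * R. t S)"
proof -
  let ?I = "{R. R < n \<and> n \<le> 3 * R + 1}"
  let ?A = "{R. n \<le> 3 * R + 1 \<and> 4 * R + 1 \<le> 2 * n + 3 ^ k}"
  let ?B = "{R. n \<le> 3 * R + 1 \<and> 4 * R + 1 \<le> 2 * n + 3 ^ k \<and> 3 * n + 2 \<le> 5 * R}"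
  let ?C = "\<lambda>R. {S. R \<le> 3 * S + 1 \<and> S + n + 1 \<le> 2 * R}"
  have "?A \<subseteq> ?I"
    using assms by auto
  have "(1::nat) \<le> 3 ^ k"
    by simp
  then have "2 * n + 1 \<le> 9 * 3 ^ k" "9 * 3 ^ k < 6 * n + 3"
    using assms by linarith+
  then have "t n = (\<Sum>R\<in>?I. card (bounded_partitions R (Suc k) (n - R)))"
    by (intro t_eq_sum_bounded_partitions) simp_all
  also have "\<dots> = (\<Sum>R\<in>?A. card (bounded_partitions R (Suc k) (n - R)))"
  proof (rule sum.mono_neutral_right)
    show "\<forall>R\<in>?I - ?A. card (bounded_partitions R (Suc k) (n - R)) = 0"
    proof
      fix R assume "R \<in> ?I - ?A"
      then have "3 ^ k + 2 * (n - R) \<le> 2 * R"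
        by auto
      then show "card (bounded_partitions R (Suc k) (n - R)) = 0"
        by (simp add: bounded_partitions_Suc_eq_empty)
    qed
  qed (use \<open>?A \<subseteq> ?I\<close> in auto)
  finally have "t n = (\<Sum>R\<in>?A. card (bounded_partitions R (Suc k) (n - R)))" .
  moreover have "t R = card (bounded_partitions R (Suc k) (n - R)) + (\<Sum>S\<in>?C R. t S)"
    if "R \<in> ?A" for R
    using that assms by (intro t_split_lower_window) auto
  ultimately have "(\<Sum>R\<in>?A. t R) = t n + (\<Sum>R\<in>?A. \<Sum>S\<in>?C R. t S)"
    by (simp add: sum.distrib)
  also have "(\<Sum>R\<in>?A. \<Sum>S\<in>?C R. t S) = (\<Sum>R\<in>?B. \<Sum>S\<in>?C R. t S)"
  proof (rule sum.mono_neutral_right)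
    show "finite ?A"
      using \<open>?A \<subseteq> ?I\<close> by (rule finite_subset) simp
    show "\<forall>R\<in>?A - ?B. (\<Sum>S\<in>?C R. t S) = 0"
    proof
      fix R assume "R \<in> ?A - ?B"
      then have "?C R = {}"
        by auto
      then show "(\<Sum>S\<in>?C R. t S) = 0"
        by (simp only: sum.empty)
    qed
  qed blast
  finally show ?thesis .
qed

lemma t_recurrence_upper:
  assumes "5 * 3 ^ k + 3 \<le> 2 * n" "2 * n + 1 \<le> 9 * 3 ^ k"
  shows "t n = (\<Sum>R | n \<le> 3 * R + 1 \<and> 2 * R + 1 \<le> 3 * 3 ^ k. t R)"
proof -
  let ?I = "{R. R < n \<and> n \<le> 3 * R + 1}"
  let ?D = "{R. n \<le> 3 * R + 1 \<and> 2 * R + 1 \<le> 3 * 3 ^ k}"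
  have "?D \<subseteq> ?I"
    using assms by auto
  have "t n = (\<Sum>R\<in>?I. card (bounded_partitions R (Suc k) (n - R)))"
    using assms by (intro t_eq_sum_bounded_partitions) simp_all
  also have "\<dots> = (\<Sum>R\<in>?D. card (bounded_partitions R (Suc k) (n - R)))"
  proof (rule sum.mono_neutral_right)
    show "\<forall>R\<in>?I - ?D. card (bounded_partitions R (Suc k) (n - R)) = 0"
    proof
      fix R assume "R \<in> ?I - ?D"
      then have "3 ^ Suc k < 2 * R + 1"
        by auto
      then show "card (bounded_partitions R (Suc k) (n - R)) = 0"
        by (simp add: bounded_partitions_eq_empty)
    qed
  qed (use \<open>?D \<subseteq> ?I\<close> in auto)
  also have "\<dots> = (\<Sum>R\<in>?D. t R)"
  proof (rule sum.cong[OF refl])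
    fix R assume "R \<in> ?D"
    then have R: "n \<le> 3 * R + 1" "2 * R + 1 \<le> 3 * 3 ^ k"
      by auto
    \<comment> \<open>the bound n - R on the parts is void: no part of a partition into k + 1 parts
      exceeds 3^k\<close>
    then have "3 ^ Suc k \<le> 3 * (n - R)"
      using assms by simp
    then have "bounded_partitions R (Suc k) (n - R) = weighing_partitions R (Suc k)"
      by (intro bounded_partitions_eq_weighing_partitions) simp
    moreover have "t R = card (weighing_partitions R (Suc k))"
      using R assms by (intro t_eq_card_weighing_partitions) simp_all
    ultimately show "card (bounded_partitions R (Suc k) (n - R)) = t R"
      by simp
  qed
  finally show ?thesis .
qed

lemma sum_int_set_eq_sum_nat:
  assumes "\<forall>x\<in>X. 0 \<le> x" "\<And>a. int a \<in> X \<longleftrightarrow> a \<in> A"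
  shows "(\<Sum>x\<in>X. f x) = (\<Sum>a\<in>A. f (int a))"
proof -
  have "X = int ` A"
  proof (intro set_eqI iffI)
    fix x assume "x \<in> X"
    then have "x = int (nat x)"
      using assms(1) by simp
    moreover from this have "nat x \<in> A"
      using assms(2) \<open>x \<in> X\<close> by metis
    ultimately show "x \<in> int ` A"
      by (rule image_eqI)
  next
    fix x assume "x \<in> int ` A"
    then show "x \<in> X"
      using assms(2) by force
  qed
  then show ?thesis
    by (simp add: sum.reindex)
qed

lemma t_recurrence_lower_int:
  fixes n P :: int
  assumes "P = 3 ^ k" "3 * P + 1 \<le> 2 * n" "2 * n \<le> 5 * P + 1"
  shows "int (t (nat n)) = (\<Sum>R | n - 1 \<le> 3 * R \<and> 4 * R \<le> 2 * n + P - 1. int (t (nat R)))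
    - (\<Sum>R | 3 * n + 2 \<le> 5 * R \<and> 4 * R \<le> 2 * n + P - 1.
         \<Sum>S | R - 1 \<le> 3 * S \<and> S \<le> 2 * R - n - 1. int (t (nat S)))"
proof -
  define Q :: nat where "Q = 3 ^ k"
  have "P = int Q"
    using assms(1) by (simp add: Q_def)
  moreover obtain N where "n = int N"
    using assms nonneg_int_cases[of n] by force
  ultimately have N: "3 * Q + 1 \<le> 2 * N" "2 * N \<le> 5 * Q + 1"
    using assms(2,3) by linarith+
  let ?A = "{R. N \<le> 3 * R + 1 \<and> 4 * R + 1 \<le> 2 * N + Q}"
  let ?B = "{R. N \<le> 3 * R + 1 \<and> 4 * R + 1 \<le> 2 * N + Q \<and> 3 * N + 2 \<le> 5 * R}"
  let ?C = "\<lambda>R. {S. R \<le> 3 * S + 1 \<and> S + N + 1 \<le> 2 * R}"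
  have "(\<Sum>R | n - 1 \<le> 3 * R \<and> 4 * R \<le> 2 * n + P - 1. int (t (nat R)))
      = (\<Sum>R\<in>?A. int (t (nat (int R))))"
    unfolding \<open>n = int N\<close> \<open>P = int Q\<close> using N by (intro sum_int_set_eq_sum_nat) auto
  moreover have "(\<Sum>R | 3 * n + 2 \<le> 5 * R \<and> 4 * R \<le> 2 * n + P - 1.
      \<Sum>S | R - 1 \<le> 3 * S \<and> S \<le> 2 * R - n - 1. int (t (nat S)))
      = (\<Sum>R\<in>?B. \<Sum>S | int R - 1 \<le> 3 * S \<and> S \<le> 2 * int R - n - 1. int (t (nat S)))"
    unfolding \<open>n = int N\<close> \<open>P = int Q\<close> using N by (intro sum_int_set_eq_sum_nat) auto
  moreover have "\<dots> = (\<Sum>R\<in>?B. \<Sum>S\<in>?C R. int (t (nat (int S))))"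
    unfolding \<open>n = int N\<close> by (intro sum.cong refl sum_int_set_eq_sum_nat) auto
  moreover have "(\<Sum>R\<in>?A. t R) = t N + (\<Sum>R\<in>?B. \<Sum>S\<in>?C R. t S)"
    using N t_recurrence_lower[of k N] unfolding Q_def by linarith
  ultimately show ?thesis
    using \<open>n = int N\<close> by (simp flip: of_nat_sum)
qed

lemma t_recurrence_lower_floor_ceiling:
  fixes n P :: int
  assumes "P = 3 ^ k"
    and "(3 * real_of_int P + 1) / 2 \<le> real_of_int n"
    and "real_of_int n \<le> (3 * real_of_int P + 1) / 2 + real_of_int P"
  shows "int (t (nat n)) =
    (\<Sum>R\<in>{\<lceil>(real_of_int n - 1) / 3\<rceil>..\<lfloor>(2 * real_of_int n + real_of_int P - 1) / 4\<rfloor>}. int (t (nat R)))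
    - (\<Sum>R\<in>{\<lceil>(3 * real_of_int n + 2) / 5\<rceil>..\<lfloor>(2 * real_of_int n + real_of_int P - 1) / 4\<rfloor>}.
         \<Sum>S\<in>{\<lceil>(real_of_int R - 1) / 3\<rceil>..2 * R - n - 1}. int (t (nat S)))"
proof -
  have "real_of_int (3 * P + 1) \<le> real_of_int (2 * n)"
    "real_of_int (2 * n) \<le> real_of_int (5 * P + 1)"
    using assms(2,3) by (simp_all add: field_simps)
  then have "3 * P + 1 \<le> 2 * n" "2 * n \<le> 5 * P + 1"
    by (simp_all only: of_int_le_iff)
  moreover have "{\<lceil>(real_of_int n - 1) / 3\<rceil>..\<lfloor>(2 * real_of_int n + real_of_int P - 1) / 4\<rfloor>}
      = {x. n - 1 \<le> 3 * x \<and> 4 * x \<le> 2 * n + P - 1}"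
    "{\<lceil>(3 * real_of_int n + 2) / 5\<rceil>..\<lfloor>(2 * real_of_int n + real_of_int P - 1) / 4\<rfloor>}
      = {x. 3 * n + 2 \<le> 5 * x \<and> 4 * x \<le> 2 * n + P - 1}"
    "{\<lceil>(real_of_int R - 1) / 3\<rceil>..2 * R - n - 1} = {x. R - 1 \<le> 3 * x \<and> x \<le> 2 * R - n - 1}"
    for R
    by (auto simp: ceiling_le_iff le_floor_iff field_simps)
  ultimately show ?thesis
    using t_recurrence_lower_int[OF assms(1)] by presburger
qed

lemma t_recurrence_upper_int:
  fixes n P :: int
  assumes "P = 3 ^ k" "5 * P + 3 \<le> 2 * n" "2 * n + 1 \<le> 9 * P"
  shows "int (t (nat n)) = (\<Sum>R | n - 1 \<le> 3 * R \<and> 2 * R + 1 \<le> 3 * P. int (t (nat R)))"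
proof -
  define Q :: nat where "Q = 3 ^ k"
  have "P = int Q"
    using assms(1) by (simp add: Q_def)
  moreover obtain N where "n = int N"
    using assms nonneg_int_cases[of n] by force
  ultimately have N: "5 * Q + 3 \<le> 2 * N" "2 * N + 1 \<le> 9 * Q"
    using assms(2,3) by linarith+
  have "(\<Sum>R | n - 1 \<le> 3 * R \<and> 2 * R + 1 \<le> 3 * P. int (t (nat R)))
      = (\<Sum>R | N \<le> 3 * R + 1 \<and> 2 * R + 1 \<le> 3 * Q. int (t (nat (int R))))"
    unfolding \<open>n = int N\<close> \<open>P = int Q\<close> using N by (intro sum_int_set_eq_sum_nat) auto
  moreover have "t N = (\<Sum>R | N \<le> 3 * R + 1 \<and> 2 * R + 1 \<le> 3 * Q. t R)"
    using N t_recurrence_upper[of k N] unfolding Q_def by linarith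
  ultimately show ?thesis
    using \<open>n = int N\<close> by (simp flip: of_nat_sum)
qed

lemma t_recurrence_upper_floor_ceiling:
  fixes n P :: int
  assumes "P = 3 ^ k"
    and "(3 * real_of_int P + 1) / 2 + real_of_int P + 1 \<le> real_of_int n"
    and "real_of_int n \<le> (9 * real_of_int P - 1) / 2"
  shows "int (t (nat n)) = (\<Sum>R\<in>{\<lceil>(real_of_int n - 1) / 3\<rceil>..(3 * P - 1) div 2}. int (t (nat R)))"
proof -
  have "real_of_int (5 * P + 3) \<le> real_of_int (2 * n)"
    "real_of_int (2 * n + 1) \<le> real_of_int (9 * P)"
    using assms(2,3) by (simp_all add: field_simps)
  then have "5 * P + 3 \<le> 2 * n" "2 * n + 1 \<le> 9 * P"
    by (simp_all only: of_int_le_iff)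
  moreover have "x \<le> (3 * P - 1) div 2 \<longleftrightarrow> 2 * x + 1 \<le> 3 * P" for x
    by presburger
  then have "{\<lceil>(real_of_int n - 1) / 3\<rceil>..(3 * P - 1) div 2} = {x. n - 1 \<le> 3 * x \<and> 2 * x + 1 \<le> 3 * P}"
    unfolding atLeastAtMost_def atLeast_def atMost_def ceiling_le_iff by (auto simp: field_simps)
  ultimately show ?thesis
    using t_recurrence_upper_int[OF assms(1)] by presburger
qed

lemma t_one: "t 1 = 1"
proof -
  have "weighing_partitions 1 1 = {{#1#}}"
  proof (intro set_eqI iffI)
    fix M assume "M \<in> weighing_partitions 1 1"
    then have "size M = 1" "sum_mset M = 1"
      by (auto simp: weighing_partitions_def weighing_partition_iff)
    then show "M \<in> {{#1#}}"
      using size_1_singleton_mset[of M] by auto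
  qed (simp add: weighing_partitions_def weighing_partition_iff two_pan_complete_def)
  then show ?thesis
    using t_eq_card_weighing_partitions[of 1 1] by simp
qed

theorem theorem6:
  fixes m :: nat
  assumes "0 < m"
  shows "(\<forall>n::int.
            ((3::real) ^ (m - 1) + 1) / 2 \<le> real_of_int n \<and>
            real_of_int n \<le> ((3::real) ^ (m - 1) + 1) / 2 + (3::real) powi (int m - 2) \<longrightarrow>
            int (t (nat n)) =
              (\<Sum>R\<in>{\<lceil>(real_of_int n - 1) / 3\<rceil>..\<lfloor>(2 * real_of_int n + (3::real) powi (int m - 2) - 1) / 4\<rfloor>}.
                  int (t (nat R)))
              - (\<Sum>R\<in>{\<lceil>(3 * real_of_int n + 2) / 5\<rceil>..\<lfloor>(2 * real_of_int n + (3::real) powi (int m - 2) - 1) / 4\<rfloor>}.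
                  \<Sum>S\<in>{\<lceil>(real_of_int R - 1) / 3\<rceil>..2 * R - n - 1}. int (t (nat S))))
       \<and> (\<forall>n::int.
            ((3::real) ^ (m - 1) + 1) / 2 + (3::real) powi (int m - 2) + 1 \<le> real_of_int n \<and>
            real_of_int n \<le> ((3::real) ^ m - 1) / 2 \<longrightarrow>
            int (t (nat n)) =
              (\<Sum>R\<in>{\<lceil>(real_of_int n - 1) / 3\<rceil>..(3 ^ (m - 1) - 1) div 2}. int (t (nat R))))"
proof (cases "m = 1")
  case True
  \<comment> \<open>the exponent m - 2 is negative: the first range is 1 \<le> n \<le> 4/3,
    the second one is empty\<close>
  then have powi: "(3::real) powi (int m - 2) = 1 / 3"
    by (simp add: power_int_def)
  have n_eq_1: "n = 1" if "1 \<le> n" "real_of_int n * 3 \<le> 4" for n :: int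
  proof -
    have "real_of_int n < real_of_int 2"
      using that(2) by simp
    then show "n = 1"
      using that(1) by (simp only: of_int_less_iff)
  qed
  show ?thesis
    using True powi t_one by (auto dest: n_eq_1 simp: t_def)
next
  case False
  then obtain k where "m = k + 2"
    using assms by (metis add.commute add_2_eq_Suc less_natE One_nat_def not0_implies_Suc)
  define P :: int where "P = 3 ^ k"
  have "(3::real) powi (int m - 2) = real_of_int P" "(3::real) ^ (m - 1) = 3 * real_of_int P"
    "(3::real) ^ m = 9 * real_of_int P" "(3::int) ^ (m - 1) = 3 * P"
    unfolding P_def \<open>m = k + 2\<close> by (simp_all add: power_int_def)
  then show ?thesis
    using t_recurrence_lower_floor_ceiling[OF P_def] t_recurrence_upper_floor_ceiling[OF P_def] by simp
qed

end
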